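(* Let $m_A=0.307394561088771942$, $M_A=0.307396653842409774$, $m_B=0.451388989838190632$, $M_B=0.451676307610047724$. Let $(x_n)_{n\ge0}$ and $(s_n)_{n\ge0}$ be sequences of positive reals such that for every $n$: if $x_n\ge s_n$ (an "A-burst" at step $n$), then $x_{n+1}\in[m_Ax_n,M_Ax_n]$ and $s_{n+1}=s_n$; if $x_n<s_n$ (a "B-burst" at step $n$), then $s_{n+1}\in[m_Bs_n,M_Bs_n]$ and $x_{n+1}=x_n$. Let $r_n=x_n/s_n$. Then for all sufficiently large $n$, $r_n\in[m_A,1/m_B]$, and moreover (i) every maximal run of consecutive A-bursts eventually has length exactly $1$; (ii) every maximal run of consecutive B-bursts eventually has length at most $2$. Consequently, eventually every block of three consecutive steps contains at least one A-burst and at least one B-burst, and $x_n+s_n\to0$.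
   Context: This is the burst-ratio dynamics of AdaBoost on a product of two gadgets: $x_n$ and $s_n$ are the principal (dominant-eigendirection) coordinates of the two gadgets at the $n$th burst boundary, the A-gadget wins burst $n$ exactly when $x_n\ge s_n$ (ties to A), and a winning gadget's coordinate contracts by a factor in the stated interval while the other is unchanged. *)

theory Defs
  imports Complex_Main
begin

definition mA :: real where "mA = 0.307394561088771942"
definition MA :: real where "MA = 0.307396653842409774"
definition mB :: real where "mB = 0.451388989838190632"
definition MB :: real where "MB = 0.451676307610047724"

end

(*
  Everything is governed by the ratio r = x/s: an A-burst multiplies it by a factor in
  [mA, MA], a B-burst divides it by a factor in [mB, MB]. Neither burst type can persist
  forever, so the type switches at some step, and right after a switch r lies in
  [mA, 1/mB], an interval the dynamics never leaves again. Inside it, an A-burst brings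
  r below MA/mB < 1, so it is followed by a B-burst, while two consecutive B-bursts lift r
  above mA/MB^2 >= 1. Finally x and s are nonincreasing and each contracts by a fixed
  factor < 1 infinitely often, so both tend to 0.
*)
theory Submission
  imports Defs
begin

lemma predicate_changes_somewhere:
  fixes P :: "nat \<Rightarrow> bool"
  assumes "P m" and "\<not> P n"
  shows "\<exists>k. P (Suc k) \<noteq> P k"
proof (rule ccontr)
  assume "\<not> ?thesis"
  then have "P k = P 0" for k by (induction k) auto
  with assms show False by metis
qed

lemma contracting_sequence_eventually_below:
  fixes y :: "nat \<Rightarrow> real"
  assumes contr: "\<And>k. k \<ge> m \<Longrightarrow> y (Suc k) \<le> c * y k"
    and "0 \<le> c" "c < 1" "0 < e"
  shows "\<exists>k\<ge>m. y k < e"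
proof -
  have geom: "y (m + j) \<le> c ^ j * y m" for j
  proof (induction j)
    case (Suc j)
    have "y (m + Suc j) \<le> c * y (m + j)" using contr[of "m + j"] by simp
    also have "\<dots> \<le> c * (c ^ j * y m)" using Suc \<open>0 \<le> c\<close> by (rule mult_left_mono)
    finally show ?case by simp
  qed simp
  have "(\<lambda>j. c ^ j * y m) \<longlonglongrightarrow> 0"
    using assms by (intro tendsto_mult_left_zero LIMSEQ_power_zero) simp
  then obtain j where "c ^ j * y m < e"
    using \<open>0 < e\<close> by (metis order_tendstoD(2) eventually_sequentially order.refl)
  with geom[of j] show ?thesis by (intro exI[of _ "m + j"]) simp
qed

lemma nonincreasing_tendsto_zero_if_frequently_contracting:
  fixes y :: "nat \<Rightarrow> real"
  assumes nonneg: "\<And>n. 0 \<le> y n" and dec: "\<And>n. y (Suc n) \<le> y n"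
    and "0 \<le> c" "c < 1"
    and contr: "\<And>m. \<exists>k\<ge>m. y (Suc k) \<le> c * y k"
  shows "y \<longlonglongrightarrow> 0"
proof -
  have "decseq y" using dec by (rule decseq_SucI)
  have below: "\<exists>n. y n \<le> c ^ j * y 0" for j
  proof (induction j)
    case (Suc j)
    then obtain n where n: "y n \<le> c ^ j * y 0" by blast
    obtain k where "k \<ge> n" "y (Suc k) \<le> c * y k" using contr by blast
    moreover have "c * y k \<le> c * y n"
      using decseqD[OF \<open>decseq y\<close> \<open>k \<ge> n\<close>] \<open>0 \<le> c\<close> by (rule mult_left_mono)
    moreover have "c * y n \<le> c ^ Suc j * y 0"
      using mult_left_mono[OF n \<open>0 \<le> c\<close>] by (simp add: mult.assoc)
    ultimately show ?case by (meson order_trans)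
  qed auto
  obtain L where L: "y \<longlonglongrightarrow> L" and L_below: "\<forall>n. L \<le> y n"
    using decseq_convergent[OF \<open>decseq y\<close>] nonneg by blast
  have "(\<lambda>j. c ^ j * y 0) \<longlonglongrightarrow> 0"
    using assms by (intro tendsto_mult_left_zero LIMSEQ_power_zero) simp
  moreover have "L \<le> c ^ j * y 0" for j using below[of j] L_below by (meson order_trans)
  ultimately have "L \<le> 0" by (intro LIMSEQ_le_const) auto
  moreover have "0 \<le> L" using L nonneg by (intro LIMSEQ_le_const) auto
  ultimately show ?thesis using L by simp
qed

locale burst_dynamics =
  fixes x s :: "nat \<Rightarrow> real" and lA uA lB uB :: real
  assumes x_pos: "\<And>n. 0 < x n" and s_pos: "\<And>n. 0 < s n"
    and factors: "0 < lA" "lA \<le> uA" "uA < 1" "0 < lB" "lB \<le> uB" "uB < 1"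
    and A_burst: "\<And>n. s n \<le> x n \<Longrightarrow>
                    x (Suc n) \<in> {lA * x n .. uA * x n} \<and> s (Suc n) = s n"
    and B_burst: "\<And>n. x n < s n \<Longrightarrow>
                    s (Suc n) \<in> {lB * s n .. uB * s n} \<and> x (Suc n) = x n"
begin

definition ratio :: "nat \<Rightarrow> real" where "ratio n = x n / s n"

lemma ratio_pos: "0 < ratio n"
  using x_pos s_pos by (simp add: ratio_def)

lemma A_burst_iff_ratio_ge_1: "s n \<le> x n \<longleftrightarrow> 1 \<le> ratio n"
  using s_pos[of n] by (simp add: ratio_def)

lemma ratio_A_step:
  assumes "s n \<le> x n"
  shows "lA * ratio n \<le> ratio (Suc n)" "ratio (Suc n) \<le> uA * ratio n"
  using A_burst[OF assms] s_pos[of n] by (auto simp: ratio_def divide_right_mono)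

lemma ratio_B_step:
  assumes "x n < s n"
  shows "ratio n / uB \<le> ratio (Suc n)" "ratio (Suc n) \<le> ratio n / lB"
proof -
  have s: "lB * s n \<le> s (Suc n)" "s (Suc n) \<le> uB * s n" and x: "x (Suc n) = x n"
    using B_burst[OF assms] by auto
  show "ratio n / uB \<le> ratio (Suc n)"
    using frac_le[OF less_imp_le[OF x_pos] order_refl s_pos s(2), of n] factors
    by (simp add: ratio_def x field_simps)
  show "ratio (Suc n) \<le> ratio n / lB"
    using frac_le[OF less_imp_le[OF x_pos] order_refl _ s(1), of n] s_pos[of n] factors
    by (simp add: ratio_def x field_simps)
qed

lemma x_nonincreasing: "x (Suc n) \<le> x n"
  using A_burst[of n] B_burst[of n] x_pos[of n] factors
  by (cases "s n \<le> x n") (auto intro: order_trans[OF _ mult_left_le_one_le])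

lemma s_nonincreasing: "s (Suc n) \<le> s n"
  using A_burst[of n] B_burst[of n] s_pos[of n] factors
  by (cases "s n \<le> x n") (auto intro: order_trans[OF _ mult_left_le_one_le])

lemma frequently_A_burst: "\<exists>k\<ge>m. s k \<le> x k"
proof (rule ccontr)
  assume "\<not> ?thesis"
  then have B: "x k < s k" if "k \<ge> m" for k using that by (meson not_le)
  have "1 / ratio (Suc k) \<le> uB * (1 / ratio k)" if "k \<ge> m" for k
    using ratio_B_step(1)[OF B[OF that]] ratio_pos[of k] ratio_pos[of "Suc k"] factors
    by (simp add: field_simps)
  then obtain k where "k \<ge> m" "1 / ratio k < 1"
    using contracting_sequence_eventually_below[of m "\<lambda>k. 1 / ratio k" uB 1] factors by auto
  then show False using B[of k] A_burst_iff_ratio_ge_1[of k] ratio_pos[of k] by simp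
qed

lemma frequently_B_burst: "\<exists>k\<ge>m. x k < s k"
proof (rule ccontr)
  assume "\<not> ?thesis"
  then have A: "s k \<le> x k" if "k \<ge> m" for k using that by (meson not_less)
  obtain k where "k \<ge> m" "ratio k < 1"
    using contracting_sequence_eventually_below[of m ratio uA 1] ratio_A_step(2)[OF A] factors
    by auto
  then show False using A[of k] A_burst_iff_ratio_ge_1[of k] by simp
qed

lemma x_tendsto_zero: "x \<longlonglongrightarrow> 0"
proof (rule nonincreasing_tendsto_zero_if_frequently_contracting)
  show "\<exists>k\<ge>m. x (Suc k) \<le> uA * x k" for m
    using frequently_A_burst[of m] A_burst by auto
qed (use x_pos x_nonincreasing factors in \<open>auto intro: less_imp_le\<close>)

lemma s_tendsto_zero: "s \<longlonglongrightarrow> 0"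
proof (rule nonincreasing_tendsto_zero_if_frequently_contracting)
  show "\<exists>k\<ge>m. s (Suc k) \<le> uB * s k" for m
    using frequently_B_burst[of m] B_burst by auto
qed (use s_pos s_nonincreasing factors in \<open>auto intro: less_imp_le\<close>)

lemma ratio_in_interval_after_switch:
  assumes "(s (Suc n) \<le> x (Suc n)) \<noteq> (s n \<le> x n)"
  shows "ratio (Suc n) \<in> {lA .. 1 / lB}"
proof (cases "s n \<le> x n")
  case True
  then have "ratio (Suc n) < 1" "1 \<le> ratio n"
    using assms A_burst_iff_ratio_ge_1 by auto
  moreover have "lA * 1 \<le> lA * ratio n" "1 \<le> 1 / lB" using calculation factors by simp_all
  ultimately show ?thesis using ratio_A_step(1)[OF True] by simp
next
  case False
  then have "1 \<le> ratio (Suc n)" "ratio n < 1"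
    using assms A_burst_iff_ratio_ge_1 by auto
  moreover have "ratio n / lB \<le> 1 / lB" using calculation factors by (simp add: divide_right_mono)
  ultimately show ?thesis using ratio_B_step(2)[of n] False factors by simp
qed

lemma ratio_interval_invariant:
  assumes "ratio n \<in> {lA .. 1 / lB}"
  shows "ratio (Suc n) \<in> {lA .. 1 / lB}"
proof (cases "s n \<le> x n")
  case True
  have "lA * 1 \<le> lA * ratio n" using True A_burst_iff_ratio_ge_1 factors by simp
  moreover have "uA * ratio n \<le> 1 * (1 / lB)"
    using assms factors by (intro mult_mono) auto
  ultimately show ?thesis using ratio_A_step[OF True] by simp
next
  case False
  then have "ratio n < 1" using A_burst_iff_ratio_ge_1 by simp
  moreover have "ratio n \<le> ratio n / uB" using ratio_pos[of n] factors by (simp add: le_divide_eq)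
  moreover have "ratio n / lB \<le> 1 / lB" using calculation factors by (simp add: divide_right_mono)
  ultimately show ?thesis using ratio_B_step[of n] False assms by auto
qed

lemma eventually_ratio_in_interval: "\<forall>\<^sub>F n in sequentially. ratio n \<in> {lA .. 1 / lB}"
proof -
  obtain k where "(s (Suc k) \<le> x (Suc k)) \<noteq> (s k \<le> x k)"
    using predicate_changes_somewhere[of "\<lambda>k. s k \<le> x k"]
      frequently_A_burst frequently_B_burst by (meson not_le)
  then have start: "ratio (Suc k) \<in> {lA .. 1 / lB}" by (rule ratio_in_interval_after_switch)
  have "ratio n \<in> {lA .. 1 / lB}" if "n \<ge> Suc k" for n
    using that by (induction n rule: dec_induct) (use start ratio_interval_invariant in auto)
  then show ?thesis by (rule eventually_sequentiallyI)
qed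

lemma A_burst_followed_by_B_burst:
  assumes "uA < lB" "ratio n \<le> 1 / lB" "s n \<le> x n"
  shows "x (Suc n) < s (Suc n)"
proof -
  have "ratio (Suc n) \<le> uA * (1 / lB)"
    using ratio_A_step(2)[OF assms(3)] mult_left_mono[OF assms(2), of uA] factors by simp
  also have "\<dots> < 1" using assms(1) factors by simp
  finally show ?thesis using A_burst_iff_ratio_ge_1[of "Suc n"] by linarith
qed

lemma no_three_B_bursts:
  assumes "uB\<^sup>2 \<le> lA" "lA \<le> ratio n" "x n < s n" "x (Suc n) < s (Suc n)"
  shows "s (Suc (Suc n)) \<le> x (Suc (Suc n))"
proof -
  have "1 \<le> ratio n / uB\<^sup>2" using assms(1,2) factors by (simp add: le_divide_eq)
  also have "\<dots> = ratio n / uB / uB" by (simp add: power2_eq_square)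
  also have "\<dots> \<le> ratio (Suc n) / uB"
    by (rule divide_right_mono) (use ratio_B_step(1)[OF assms(3)] factors in auto)
  also have "\<dots> \<le> ratio (Suc (Suc n))" using ratio_B_step(1)[OF assms(4)] .
  finally show ?thesis using A_burst_iff_ratio_ge_1 by simp
qed

lemma both_bursts_within_three_steps:
  assumes "uA < lB" "uB\<^sup>2 \<le> lA" "ratio n \<in> {lA .. 1 / lB}"
  shows "(\<exists>k\<in>{n..n+2}. s k \<le> x k) \<and> (\<exists>k\<in>{n..n+2}. x k < s k)"
proof (cases "s n \<le> x n")
  case True
  then show ?thesis using A_burst_followed_by_B_burst[of n] assms by force
next
  case False
  then have "x n < s n" by simp
  moreover have "\<exists>k\<in>{n..n+2}. s k \<le> x k"
  proof (cases "x (Suc n) < s (Suc n)")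
    case True
    then show ?thesis
      using no_three_B_bursts[of n] assms \<open>x n < s n\<close> by (intro bexI[of _ "n + 2"]) auto
  next
    case False
    then show ?thesis by (intro bexI[of _ "Suc n"]) auto
  qed
  ultimately show ?thesis by auto
qed

end

lemma burst_factor_bounds:
  "0 < mA" "mA \<le> MA" "MA < 1" "0 < mB" "mB \<le> MB" "MB < 1" "MA < mB" "MB\<^sup>2 \<le> mA"
  by (simp_all add: mA_def MA_def mB_def MB_def power2_eq_square)

theorem lemma6:
  fixes x s :: "nat \<Rightarrow> real"
  assumes xpos: "\<And>n. x n > 0"
    and spos: "\<And>n. s n > 0"
    and Aburst: "\<And>n. x n \<ge> s n \<Longrightarrow>
                   x (Suc n) \<in> {mA * x n .. MA * x n} \<and> s (Suc n) = s n"
    and Bburst: "\<And>n. x n < s n \<Longrightarrow>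
                   s (Suc n) \<in> {mB * s n .. MB * s n} \<and> x (Suc n) = x n"
  shows "(\<forall>\<^sub>F n in sequentially. x n / s n \<in> {mA .. 1 / mB})
    \<and> (\<forall>\<^sub>F n in sequentially. x n \<ge> s n \<longrightarrow> \<not> (x (Suc n) \<ge> s (Suc n)))
    \<and> (\<forall>\<^sub>F n in sequentially.
          \<not> (x n < s n \<and> x (n+1) < s (n+1) \<and> x (n+2) < s (n+2)))
    \<and> (\<forall>\<^sub>F n in sequentially.
          (\<exists>k\<in>{n..n+2}. x k \<ge> s k) \<and> (\<exists>k\<in>{n..n+2}. x k < s k))
    \<and> ((\<lambda>n. x n + s n) \<longlonglongrightarrow> 0)"
proof -
  interpret burst_dynamics x s mA MA mB MB
    by unfold_locales (use xpos spos Aburst Bburst burst_factor_bounds in auto)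
  note gaps = burst_factor_bounds(7,8)
  have I: "\<forall>\<^sub>F n in sequentially. ratio n \<in> {mA .. 1 / mB}"
    by (rule eventually_ratio_in_interval)
  show ?thesis
  proof (intro conjI)
    show "\<forall>\<^sub>F n in sequentially. x n / s n \<in> {mA .. 1 / mB}"
      using I by (simp add: ratio_def)
    show "\<forall>\<^sub>F n in sequentially. x n \<ge> s n \<longrightarrow> \<not> (x (Suc n) \<ge> s (Suc n))"
      using I
      by eventually_elim (use A_burst_followed_by_B_burst gaps in \<open>auto simp: not_le\<close>)
    show "\<forall>\<^sub>F n in sequentially.
          \<not> (x n < s n \<and> x (n+1) < s (n+1) \<and> x (n+2) < s (n+2))"
      using I
      by eventually_elim (use no_three_B_bursts[OF gaps(2)] in \<open>force simp: numeral_2_eq_2 not_le\<close>)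
    show "\<forall>\<^sub>F n in sequentially.
          (\<exists>k\<in>{n..n+2}. x k \<ge> s k) \<and> (\<exists>k\<in>{n..n+2}. x k < s k)"
      using I by eventually_elim (use both_bursts_within_three_steps gaps in blast)
    show "(\<lambda>n. x n + s n) \<longlonglongrightarrow> 0"
      using tendsto_add[OF x_tendsto_zero s_tendsto_zero] by simp
  qed
qed

end
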